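(* Let $\tilde f(t)=t\int_{1}^{\infty}x^{-tx}\,dx$ for real $t>0$. Then $\tilde f(t)\to1$ as $t\to+\infty$.
   Context: $x^{-tx}=\exp(-tx\ln x)$ for $x\ge1$. *)

theory Defs
  imports "HOL-Analysis.Analysis"
begin

definition ftilde :: "real \<Rightarrow> real" where
  "ftilde t = t * integral {1..} (\<lambda>x::real. x powr (- t * x))"

end

theory Submission
  imports Defs "HOL-Real_Asymp.Real_Asymp"
begin

text \<open>Since \<open>x - 1 \<le> x ln x\<close>, the integrand \<open>x powr (-t x)\<close> is dominated by
  \<open>exp (-t (x - 1))\<close>, whose integral over \<open>[1, \<infinity>)\<close> is \<open>1 / t\<close>; hence \<open>ftilde t \<le> 1\<close>.
  Conversely, \<open>x ln x \<le> (1 + d) (x - 1)\<close> on \<open>[1, 1 + d]\<close>, and integrating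
  \<open>exp (-t (1 + d) (x - 1))\<close> over that interval gives
  \<open>ftilde t \<ge> (1 - exp (-t (1 + d) d)) / (1 + d)\<close>. With \<open>d = 1 / sqrt t\<close> this lower bound
  tends to 1 as well.\<close>

lemma x_minus_one_le_x_ln_x:
  fixes x :: real
  assumes "0 < x"
  shows "x - 1 \<le> x * ln x"
proof -
  have "ln (1 / x) \<le> 1 / x - 1"
    using assms by (intro ln_le_minus_one) auto
  then have "1 - 1 / x \<le> ln x"
    using assms by (simp add: ln_div)
  then have "x * (1 - 1 / x) \<le> x * ln x"
    using assms by (intro mult_left_mono) auto
  moreover have "x * (1 - 1 / x) = x - 1"
    using assms by (simp add: field_simps)
  ultimately show ?thesis
    by simp
qed

lemma x_ln_x_le:
  fixes x b :: real
  assumes "1 \<le> x" "x \<le> b"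
  shows "x * ln x \<le> b * (x - 1)"
proof -
  have "ln x \<le> x - 1"
    using assms by (intro ln_le_minus_one) auto
  then show ?thesis
    using assms by (intro mult_mono) auto
qed

lemma powr_neg_mult_le_exp:
  fixes t x :: real
  assumes "0 \<le> t" "1 \<le> x"
  shows "x powr (- t * x) \<le> exp (- t * (x - 1))"
proof -
  have "t * (x - 1) \<le> t * (x * ln x)"
    using assms x_minus_one_le_x_ln_x[of x] by (intro mult_left_mono) auto
  then show ?thesis
    using assms by (simp add: powr_def algebra_simps)
qed

lemma exp_le_powr_neg_mult:
  fixes t x b :: real
  assumes "0 \<le> t" "1 \<le> x" "x \<le> b"
  shows "exp (- t * b * (x - 1)) \<le> x powr (- t * x)"
proof -
  have "t * (x * ln x) \<le> t * (b * (x - 1))"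
    using assms x_ln_x_le[of x b] by (intro mult_left_mono) auto
  then show ?thesis
    using assms by (simp add: powr_def algebra_simps)
qed

lemma has_integral_exp_minus_shifted_to_infinity:
  fixes a c :: real
  assumes "0 < a"
  shows "((\<lambda>x. exp (- a * (x - c))) has_integral 1 / a) {c..}"
proof -
  have "((\<lambda>x. exp (a * c) * exp (- a * x)) has_integral exp (a * c) * (exp (- a * c) / a)) {c..}"
    using has_integral_exp_minus_to_infinity[OF assms] by (intro has_integral_mult_right)
  moreover have "exp (a * c) * exp (- a * x) = exp (- a * (x - c))" for x
    by (simp flip: exp_add add: algebra_simps)
  moreover have "exp (a * c) * (exp (- a * c) / a) = 1 / a"
    by (simp flip: exp_add)
  ultimately show ?thesis
    by simp
qed

lemma has_integral_exp_minus_shifted: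
  fixes a b c :: real
  assumes "0 < a" "c \<le> b"
  shows "((\<lambda>x. exp (- a * (x - c))) has_integral (1 - exp (- a * (b - c))) / a) {c..b}"
proof -
  have "((\<lambda>x. exp (- a * (x - c))) has_integral
          (- exp (- a * (b - c)) / a) - (- exp (- a * (c - c)) / a)) {c..b}"
    using assms
    by (intro fundamental_theorem_of_calculus)
       (auto intro!: derivative_eq_intros
             simp flip: has_real_derivative_iff_has_vector_derivative simp: field_simps)
  then show ?thesis
    by (simp add: diff_divide_distrib)
qed

lemma powr_neg_mult_integrable:
  fixes t :: real
  assumes "0 < t"
  shows "(\<lambda>x. x powr (- t * x)) integrable_on {1..}"
proof (rule measurable_bounded_by_integrable_imp_integrable_real)
  have "continuous_on {1..} (\<lambda>x::real. x powr (- t * x))"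
    by (intro continuous_intros) auto
  then show "(\<lambda>x. x powr (- t * x)) \<in> borel_measurable (lebesgue_on {1..})"
    by (intro continuous_imp_measurable_on_sets_lebesgue) auto
  show "(\<lambda>x. exp (- t * (x - 1))) integrable_on {1..}"
    using has_integral_exp_minus_shifted_to_infinity[OF assms] by blast
  show "\<bar>x powr (- t * x)\<bar> \<le> exp (- t * (x - 1))" if "x \<in> {1..}" for x
    using that assms powr_neg_mult_le_exp[of t x] by simp
qed auto

lemma ftilde_le_one:
  assumes "0 < t"
  shows "ftilde t \<le> 1"
proof -
  have "integral {1..} (\<lambda>x. x powr (- t * x)) \<le> 1 / t"
    using assms powr_neg_mult_le_exp[of t]
    by (intro has_integral_le[OF integrable_integral[OF powr_neg_mult_integrable]
                                 has_integral_exp_minus_shifted_to_infinity]) auto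
  then show ?thesis
    using assms by (simp add: ftilde_def field_simps)
qed

lemma ftilde_ge:
  assumes "0 < t" "0 < d"
  shows "(1 - exp (- t * (1 + d) * d)) / (1 + d) \<le> ftilde t"
proof -
  have integrable: "(\<lambda>x. x powr (- t * x)) integrable_on {1..1 + d}"
    using assms by (intro integrable_on_subinterval[OF powr_neg_mult_integrable]) auto
  have "(1 - exp (- (t * (1 + d)) * d)) / (t * (1 + d))
          \<le> integral {1..1 + d} (\<lambda>x. x powr (- t * x))"
    using assms has_integral_exp_minus_shifted[of "t * (1 + d)" 1 "1 + d"]
          exp_le_powr_neg_mult[of t _ "1 + d"]
    by (intro has_integral_le[OF _ integrable_integral[OF integrable]]) (auto simp: mult.assoc)
  also have "\<dots> \<le> integral {1..} (\<lambda>x. x powr (- t * x))"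
    using assms integrable powr_neg_mult_integrable[of t] by (intro integral_subset_le) auto
  finally have "t * ((1 - exp (- (t * (1 + d)) * d)) / (t * (1 + d))) \<le> ftilde t"
    using assms unfolding ftilde_def by (intro mult_left_mono) auto
  then show ?thesis
    using assms by simp
qed

theorem mainTheorem9:
  shows "(ftilde \<longlongrightarrow> 1) at_top"
proof (rule tendsto_sandwich)
  let ?lower = "\<lambda>t::real. (1 - exp (- t * (1 + 1 / sqrt t) * (1 / sqrt t))) / (1 + 1 / sqrt t)"
  show "\<forall>\<^sub>F t in at_top. ?lower t \<le> ftilde t"
    using eventually_gt_at_top[of 0] by eventually_elim (intro ftilde_ge, auto)
  show "\<forall>\<^sub>F t in at_top. ftilde t \<le> 1"
    using eventually_gt_at_top[of 0] by eventually_elim (rule ftilde_le_one)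
  show "(?lower \<longlongrightarrow> 1) at_top"
    by real_asymp
qed auto

end
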